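(* Fix $\delta>0$. As $T\to\infty$ along $2\mathbb N$, $$Q^1_T(\phi(\delta,T))=\sqrt{1-e^{-2\phi(\delta,\infty)}}\;e^{-c_\delta T}\,(1+o(1)),$$ where $c_\delta:=\phi(\delta,\infty)+\log\big(1+\sqrt{1-e^{-2\phi(\delta,\infty)}}\big)=\frac\delta2+\log\sqrt{2-e^{-\delta}}$.
   Context: $(S_n)$ is the simple symmetric random walk on $\mathbb Z$ started at $0$ with law $\mathbf P$. For $T\in2\mathbb N\cup\{\infty\}$ (convention $\infty\mathbb Z=\{0\}$), $\tau_1^T:=\inf\{n>0:S_n\in T\mathbb Z\}$, $\varepsilon^T_1:=S_{\tau^T_1}/T$, $Q^1_T(\lambda):=\mathbf E[e^{-\lambda\tau^T_1}\mathbf 1_{\{\varepsilon^T_1=1\}}]$ and $Q_T(\lambda):=\mathbf E[e^{-\lambda\tau^T_1}]$. For $\delta>0$, $\phi(\delta,T)$ denotes the unique real solution $\lambda$ of $Q_T(\lambda)=e^{-\delta}$; in particular $\phi(\delta,\infty)=\frac\delta2-\log\sqrt{2-e^{-\delta}}>0$. *)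

theory Defs
  imports "HOL-Analysis.Analysis" "HOL-Library.Extended_Nat" "HOL-Library.Landau_Symbols"
begin

text \<open>Simple symmetric random walk, encoded by its finite-dimensional law:
  the first n steps are uniformly distributed on the 2^n sequences in {-1,1}^n.\<close>

definition walk :: "int list \<Rightarrow> nat \<Rightarrow> int" where
  "walk xs k = sum_list (take k xs)"

definition step_paths :: "nat \<Rightarrow> int list set" where
  "step_paths n = {xs. set xs \<subseteq> {-1, 1} \<and> length xs = n}"

text \<open>Membership in T*Z, with the convention infinity*Z = {0}.\<close>
definition in_lattice :: "enat \<Rightarrow> int \<Rightarrow> bool" where
  "in_lattice T x = (case T of \<infinity> \<Rightarrow> x = 0 | enat t \<Rightarrow> int t dvd x)"

text \<open>The event tau_1^T = n (for n > 0), in terms of the first n steps.\<close>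
definition first_hit :: "enat \<Rightarrow> nat \<Rightarrow> int list \<Rightarrow> bool" where
  "first_hit T n xs = (0 < n \<and> (\<forall>k. 0 < k \<and> k < n \<longrightarrow> \<not> in_lattice T (walk xs k))
                        \<and> in_lattice T (walk xs n))"

definition tau_prob :: "enat \<Rightarrow> nat \<Rightarrow> real" where
  "tau_prob T n = real (card {xs \<in> step_paths n. first_hit T n xs}) / 2 ^ n"

text \<open>P(tau_1^T = n, eps_1^T = 1), i.e. S_{tau} = T, for finite T.\<close>
definition tau1_prob :: "nat \<Rightarrow> nat \<Rightarrow> real" where
  "tau1_prob T n = real (card {xs \<in> step_paths n. first_hit (enat T) n xs \<and> walk xs n = int T}) / 2 ^ n"

text \<open>Q_T(lambda) = E[exp(-lambda tau_1^T)], as an extended nonnegative real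
  (infinite when the series diverges). tau_1^T < infinity a.s., so the event
  tau = infinity does not contribute.\<close>
definition Q :: "enat \<Rightarrow> real \<Rightarrow> ennreal" where
  "Q T l = (\<Sum>n. ennreal (exp (- l * real n) * tau_prob T n))"

definition Q1 :: "nat \<Rightarrow> real \<Rightarrow> real" where
  "Q1 T l = enn2real (\<Sum>n. ennreal (exp (- l * real n) * tau1_prob T n))"

definition phi :: "real \<Rightarrow> enat \<Rightarrow> real" where
  "phi \<delta> T = (THE l. Q T l = ennreal (exp (- \<delta>)))"

definition c_delta :: "real \<Rightarrow> real" where
  "c_delta \<delta> = phi \<delta> \<infinity> + ln (1 + sqrt (1 - exp (- 2 * phi \<delta> \<infinity>)))"

end

theory Submission
  imports Defs
begin

(* Proof idea.  Substitute s_of r = 2r/(1+r^2), a bijection of (0,1) onto itself, and evaluate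
   the Laplace transforms at lambda = -ln (s_of r).

   1. Paths of the walk, and paths confined to a strip (0,T) (strip_paths): their generating
      function solves a discrete Dirichlet problem, which by the maximum principle has the
      explicit solution top_exit_gf T r k = (r^(T-k) - r^(T+k)) / (1 - r^(2T)).
   2. Started with a +1 step, the walk first hits tZ at time n+1 iff its remaining n steps
      stay in (0,t) and end in {0,t}; reflection handles a first step -1.  Hence
      Q_t(-ln s_of r) = hit_gf t r and Q^1_t(-ln s_of r) = top_hit_gf t r in closed form.
   3. tau^infinity and tau^t agree before time t, so Q_infinity(-ln s_of r) = 2r^2/(1+r^2).
      Q_T is strictly decreasing, so phi(delta,T) = -ln (s_of b) for the root b of
      Q_T(-ln s_of b) = e^-delta; at T = infinity the root is a = root_inf e^-delta.
   4. The roots b_t for finite t satisfy 0 < a - b_t = O(a^t), whence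
      top_hit_gf t b_t ~ (1-a^2)/(1+a^2) a^t; finally c_delta = -ln a is made explicit and
      the main theorem lemma7 combines these facts. *)


section \<open>Paths of the walk\<close>

lemma walk_0 [simp]: "walk xs 0 = 0"
  by (simp add: walk_def)

lemma walk_Cons_Suc [simp]: "walk (y # ys) (Suc k) = y + walk ys k"
  by (simp add: walk_def)

lemma walk_increment:
  assumes "set xs \<subseteq> {-1, 1}"
  shows "\<bar>walk xs (Suc k) - walk xs k\<bar> \<le> 1"
proof (cases "k < length xs")
  case True
  then have "take (Suc k) xs = take k xs @ [xs ! k]" by (simp add: take_Suc_conv_app_nth)
  moreover have "xs ! k \<in> {-1, 1}" using True assms nth_mem by blast
  ultimately show ?thesis by (auto simp: walk_def)
qed (simp add: walk_def)

lemma walk_abs_le: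
  assumes "set xs \<subseteq> {-1, 1}"
  shows "\<bar>walk xs k\<bar> \<le> int k"
proof (induction k)
  case (Suc k)
  then show ?case using walk_increment[OF assms, of k] by linarith
qed simp

lemma discrete_ivt:
  fixes f :: "nat \<Rightarrow> int"
  assumes step: "\<And>k. \<bar>f (Suc k) - f k\<bar> \<le> 1" and "i \<le> j" "f i \<le> c" "c \<le> f j"
  shows "\<exists>k. i \<le> k \<and> k \<le> j \<and> f k = c"
  using assms(2-4)
proof (induction j)
  case (Suc j)
  show ?case
  proof (cases "i \<le> j \<and> c \<le> f j")
    case True
    then obtain k where "i \<le> k" "k \<le> j" "f k = c" using Suc.IH Suc.prems by auto
    then show ?thesis by (intro exI[of _ k]) auto
  next
    case False
    then have "i = Suc j \<or> f j < c" using Suc.prems by auto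
    then show ?thesis
    proof
      assume "f j < c"
      then have "f (Suc j) = c" using step[of j] Suc.prems by linarith
      then show ?thesis using Suc.prems by auto
    qed (use Suc.prems in auto)
  qed
qed auto

lemma walk_ivt_up:
  assumes "set xs \<subseteq> {-1, 1}" "i \<le> j" "walk xs i \<le> c" "c \<le> walk xs j"
  shows "\<exists>k. i \<le> k \<and> k \<le> j \<and> walk xs k = c"
  by (rule discrete_ivt[OF walk_increment[OF assms(1)] assms(2-4)])

lemma walk_ivt_down:
  assumes "set xs \<subseteq> {-1, 1}" "i \<le> j" "walk xs j \<le> c" "c \<le> walk xs i"
  shows "\<exists>k. i \<le> k \<and> k \<le> j \<and> walk xs k = c"
proof -
  have "\<exists>k. i \<le> k \<and> k \<le> j \<and> - walk xs k = - c"
    by (rule discrete_ivt[of "\<lambda>k. - walk xs k"])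
      (use walk_increment[OF assms(1)] assms in \<open>auto simp: abs_minus_commute\<close>)
  then show ?thesis by auto
qed

lemma walk_uminus: "walk (map uminus xs) k = - walk xs k"
proof -
  have "sum_list (map uminus ys) = - sum_list (ys :: int list)" for ys
    by (induction ys) auto
  then show ?thesis by (simp add: walk_def take_map)
qed

lemma step_paths_0: "step_paths 0 = {[]}"
  by (auto simp: step_paths_def)

lemma step_paths_Suc_iff:
  "xs \<in> step_paths (Suc n) \<longleftrightarrow> (\<exists>y ys. xs = y # ys \<and> y \<in> {-1, 1} \<and> ys \<in> step_paths n)"
  by (cases xs) (auto simp: step_paths_def)

lemma finite_step_paths: "finite (step_paths n)"
  unfolding step_paths_def by (rule finite_lists_length_eq) simp

lemma step_paths_set: "xs \<in> step_paths n \<Longrightarrow> set xs \<subseteq> {-1, 1}"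
  by (simp add: step_paths_def)

lemma card_step_paths_Suc:
  "card {xs \<in> step_paths (Suc n). P xs}
     = card {ys \<in> step_paths n. P (1 # ys)} + card {ys \<in> step_paths n. P ((-1) # ys)}"
proof -
  define A where "A y = {ys \<in> step_paths n. P (y # ys)}" for y :: int
  have split: "{xs \<in> step_paths (Suc n). P xs} = Cons 1 ` A 1 \<union> Cons (-1) ` A (-1)"
    by (auto simp: step_paths_Suc_iff A_def)
  have "finite (A y)" for y
    using finite_step_paths by (auto simp: A_def)
  then have "card (Cons 1 ` A 1 \<union> Cons (-1) ` A (-1)) = card (A 1) + card (A (-1))"
    by (subst card_Un_disjoint) (auto simp: card_image)
  then show ?thesis by (simp add: split A_def)
qed

lemma card_step_paths_reflect:
  "card {ys \<in> step_paths n. P (map uminus ys)} = card {ys \<in> step_paths n. P ys}"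
proof -
  have inv: "map uminus (map uminus ys) = (ys :: int list)" for ys by simp
  have "map uminus ` {ys \<in> step_paths n. P (map uminus ys)} = {ys \<in> step_paths n. P ys}"
  proof (intro set_eqI iffI)
    fix ys assume "ys \<in> {ys \<in> step_paths n. P ys}"
    then show "ys \<in> map uminus ` {ys \<in> step_paths n. P (map uminus ys)}"
      by (intro image_eqI[of _ _ "map uminus ys"]) (auto simp: step_paths_def)
  qed (fastforce simp: step_paths_def)
  moreover have "inj (map uminus :: int list \<Rightarrow> int list)"
    by (metis inv injI)
  ultimately show ?thesis
    by (metis (no_types, lifting) card_image inj_on_subset subset_UNIV)
qed


section \<open>Paths confined to a strip\<close>

definition stays_in_strip :: "nat \<Rightarrow> int \<Rightarrow> nat \<Rightarrow> int list \<Rightarrow> bool" where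
  "stays_in_strip T x n xs = (\<forall>k<n. 0 < x + walk xs k \<and> x + walk xs k < int T)"

definition strip_paths :: "nat \<Rightarrow> (int \<Rightarrow> bool) \<Rightarrow> int \<Rightarrow> nat \<Rightarrow> int list set" where
  "strip_paths T P x n = {xs \<in> step_paths n. stays_in_strip T x n xs \<and> P (x + walk xs n)}"

definition strip_prob :: "nat \<Rightarrow> (int \<Rightarrow> bool) \<Rightarrow> int \<Rightarrow> nat \<Rightarrow> real" where
  "strip_prob T P x n = real (card (strip_paths T P x n)) / 2 ^ n"

lemma stays_in_strip_Cons:
  "stays_in_strip T x (Suc n) (y # ys) \<longleftrightarrow> 0 < x \<and> x < int T \<and> stays_in_strip T (x + y) n ys"
  by (auto simp: stays_in_strip_def less_Suc_eq_0_disj algebra_simps)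

lemma strip_prob_0: "strip_prob T P x 0 = (if P x then 1 else 0)"
  by (simp add: strip_prob_def strip_paths_def step_paths_0 stays_in_strip_def)

lemma strip_prob_outside:
  assumes "\<not> (0 < x \<and> x < int T)"
  shows "strip_prob T P x (Suc n) = 0"
proof -
  have "strip_paths T P x (Suc n) = {}"
    using assms by (auto simp: strip_paths_def stays_in_strip_def)
  then show ?thesis by (simp add: strip_prob_def)
qed

lemma strip_prob_Suc:
  assumes "0 < x" "x < int T"
  shows "strip_prob T P x (Suc n) = (strip_prob T P (x + 1) n + strip_prob T P (x - 1) n) / 2"
proof -
  have "card (strip_paths T P x (Suc n))
      = card (strip_paths T P (x + 1) n) + card (strip_paths T P (x - 1) n)"
    unfolding strip_paths_def card_step_paths_Suc
    using assms by (simp add: stays_in_strip_Cons algebra_simps)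
  then show ?thesis by (simp add: strip_prob_def field_simps)
qed

lemma strip_prob_nonneg: "0 \<le> strip_prob T P x n"
  by (simp add: strip_prob_def)

lemma strip_prob_le_1: "strip_prob T P x n \<le> 1"
proof (induction n arbitrary: x)
  case (Suc n)
  show ?case
    using Suc.IH[of "x + 1"] Suc.IH[of "x - 1"]
    by (cases "0 < x \<and> x < int T") (simp_all add: strip_prob_Suc strip_prob_outside)
qed (simp add: strip_prob_0)


section \<open>Generating functions of strip paths\<close>

definition strip_gf :: "nat \<Rightarrow> (int \<Rightarrow> bool) \<Rightarrow> real \<Rightarrow> int \<Rightarrow> real" where
  "strip_gf T P s x = (\<Sum>n. s ^ n * strip_prob T P x n)"

lemma summable_strip_gf:
  assumes "0 \<le> s" "s < 1"
  shows "summable (\<lambda>n. s ^ n * strip_prob T P x n)"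
proof (rule summable_comparison_test'[where g="\<lambda>n. s ^ n" and N=0])
  show "summable (\<lambda>n. s ^ n)" using assms by (intro summable_geometric) simp
  fix n
  have "s ^ n * strip_prob T P x n \<le> s ^ n"
    using assms strip_prob_le_1 by (intro mult_left_le) auto
  then show "norm (s ^ n * strip_prob T P x n) \<le> s ^ n"
    using assms strip_prob_nonneg by (simp add: abs_mult)
qed

lemma strip_gf_split:
  assumes "0 \<le> s" "s < 1"
  shows "strip_gf T P s x = (if P x then 1 else 0) + (\<Sum>n. s ^ Suc n * strip_prob T P x (Suc n))"
  using suminf_split_head[OF summable_strip_gf[OF assms, of T P x]]
  by (simp add: strip_gf_def strip_prob_0)

lemma strip_gf_rec:
  assumes s: "0 \<le> s" "s < 1" and x: "0 < x" "x < int T"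
  shows "strip_gf T P s x
       = (if P x then 1 else 0) + s / 2 * strip_gf T P s (x + 1) + s / 2 * strip_gf T P s (x - 1)"
proof -
  have up: "summable (\<lambda>n. s ^ n * strip_prob T P (x + 1) n)"
    and down: "summable (\<lambda>n. s ^ n * strip_prob T P (x - 1) n)"
    using summable_strip_gf[OF s] by auto
  have "(\<Sum>n. s ^ Suc n * strip_prob T P x (Suc n))
      = (\<Sum>n. s / 2 * (s ^ n * strip_prob T P (x + 1) n) + s / 2 * (s ^ n * strip_prob T P (x - 1) n))"
    using x by (simp add: strip_prob_Suc field_simps)
  also have "(\<Sum>n. s / 2 * (s ^ n * strip_prob T P (x + 1) n) + s / 2 * (s ^ n * strip_prob T P (x - 1) n))
      = s / 2 * strip_gf T P s (x + 1) + s / 2 * strip_gf T P s (x - 1)"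
    unfolding strip_gf_def
    by (simp only: suminf_mult[symmetric] suminf_add summable_mult up down)
  finally have "(\<Sum>n. s ^ Suc n * strip_prob T P x (Suc n))
      = s / 2 * strip_gf T P s (x + 1) + s / 2 * strip_gf T P s (x - 1)" .
  then show ?thesis using strip_gf_split[OF s] by simp
qed

lemma strip_gf_outside:
  assumes s: "0 \<le> s" "s < 1" and x: "\<not> (0 < x \<and> x < int T)"
  shows "strip_gf T P s x = (if P x then 1 else 0)"
  using strip_gf_split[OF s, of T P x] x by (simp add: strip_prob_outside)

lemma discrete_max_principle:
  fixes D :: "nat \<Rightarrow> real"
  assumes s: "0 \<le> s" "s < 1" and D0: "D 0 = 0" and DT: "D T = 0"
    and rec: "\<And>k. 0 < k \<Longrightarrow> k < T \<Longrightarrow> D k = s / 2 * (D (k + 1) + D (k - 1))"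
    and kT: "k \<le> T"
  shows "D k = 0"
proof -
  define M where "M = Max ((\<lambda>k. \<bar>D k\<bar>) ` {0..T})"
  have le_M: "\<And>k. k \<le> T \<Longrightarrow> \<bar>D k\<bar> \<le> M"
    unfolding M_def by (rule Max_ge) auto
  have "M \<in> (\<lambda>k. \<bar>D k\<bar>) ` {0..T}"
    unfolding M_def by (rule Max_in) auto
  then obtain k0 where k0: "k0 \<le> T" "\<bar>D k0\<bar> = M" by auto
  have "M \<le> 0"
  proof (cases "0 < k0 \<and> k0 < T")
    case True
    have "M = \<bar>s / 2 * (D (k0 + 1) + D (k0 - 1))\<bar>"
      using rec[of k0] True k0 by simp
    also have "\<dots> = s / 2 * \<bar>D (k0 + 1) + D (k0 - 1)\<bar>"
      using s by (simp add: abs_mult)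
    also have "\<dots> \<le> s / 2 * (\<bar>D (k0 + 1)\<bar> + \<bar>D (k0 - 1)\<bar>)"
      using s by (intro mult_left_mono abs_triangle_ineq) auto
    also have "\<dots> \<le> s / 2 * (M + M)"
      using s True by (intro mult_left_mono add_mono le_M) auto
    finally have "(1 - s) * M \<le> 0" by (simp add: algebra_simps)
    then show ?thesis using s by (simp add: mult_le_0_iff)
  next
    case False
    then have "k0 = 0 \<or> k0 = T" using k0 by auto
    then show ?thesis using k0 D0 DT by auto
  qed
  then show ?thesis using le_M[OF kT] by simp
qed

lemma strip_gf_unique:
  assumes s: "0 \<le> s" "s < 1"
    and W0: "strip_gf T P s 0 = W 0" and WT: "strip_gf T P s (int T) = W T"
    and Wrec: "\<And>k. 0 < k \<Longrightarrow> k < T \<Longrightarrow> W k = s / 2 * (W (k + 1) + W (k - 1))"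
    and P: "\<And>k. 0 < k \<Longrightarrow> k < T \<Longrightarrow> \<not> P (int k)"
    and k: "k \<le> T"
  shows "strip_gf T P s (int k) = W k"
proof -
  define D where "D k = strip_gf T P s (int k) - W k" for k
  have "D k = 0"
  proof (rule discrete_max_principle[OF s _ _ _ k])
    show "D 0 = 0" "D T = 0" using W0 WT by (simp_all add: D_def)
    fix k assume k: "0 < k" "k < T"
    have "int (k + 1) = int k + 1" "int (k - 1) = int k - 1" using k by auto
    then show "D k = s / 2 * (D (k + 1) + D (k - 1))"
      using strip_gf_rec[OF s, of "int k" T P] Wrec[OF k] P[OF k] k
      by (simp add: D_def algebra_simps)
  qed
  then show ?thesis by (simp add: D_def)
qed


definition s_of :: "real \<Rightarrow> real" where
  "s_of r = 2 * r / (1 + r ^ 2)"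

text \<open>The solution of the Dirichlet problem with boundary values \<open>0\<close> at \<open>0\<close> and \<open>1\<close> at \<open>T\<close>.\<close>
definition top_exit_gf :: "nat \<Rightarrow> real \<Rightarrow> nat \<Rightarrow> real" where
  "top_exit_gf T r k = (r ^ (T - k) - r ^ (T + k)) / (1 - r ^ (2 * T))"

lemma s_of_pos: "0 < r \<Longrightarrow> 0 < s_of r"
  unfolding s_of_def by (simp add: add_pos_nonneg)

lemma s_of_less_1:
  assumes "0 < r" "r < 1"
  shows "s_of r < 1"
proof -
  have "0 < (1 - r) ^ 2" using assms by simp
  then have "2 * r < 1 + r ^ 2" by (simp add: power2_eq_square algebra_simps)
  then show ?thesis unfolding s_of_def using assms by (simp add: add_pos_nonneg)
qed

lemma s_of_range: "0 < r \<Longrightarrow> r < 1 \<Longrightarrow> 0 \<le> s_of r \<and> s_of r < 1"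
  using s_of_pos s_of_less_1 by (auto intro: less_imp_le)

lemma s_of_half: "s_of r / 2 = r / (1 + r ^ 2)"
proof -
  have "1 + r ^ 2 \<noteq> 0" using zero_le_power2[of r] by linarith
  then show ?thesis by (simp add: s_of_def field_simps)
qed

lemma top_exit_gf_rec:
  assumes r: "0 < r" "r < 1" and k: "0 < k" "k < T"
  shows "top_exit_gf T r k = s_of r / 2 * (top_exit_gf T r (k + 1) + top_exit_gf T r (k - 1))"
proof -
  obtain i where i: "k = Suc i" using k by (cases k) auto
  obtain j where j: "T = Suc (k + j)" using less_imp_Suc_add[OF k(2)] by blast
  have "r ^ (2 * T) < 1" using r k by (subst power_less_one_iff) auto
  then have d: "1 - r ^ (2 * T) \<noteq> 0" by simp
  have p: "1 + r ^ 2 \<noteq> 0" using zero_le_power2[of r] by linarith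
  have e1: "T - k = Suc j" "T - (k + 1) = j" "T - (k - 1) = Suc (Suc j)"
    and e2: "T + k = Suc (T + i)" "T + (k + 1) = Suc (Suc (T + i))" "T + (k - 1) = T + i"
    using i j by auto
  have alg: "(r * a - r * b) / D = r / (1 + r ^ 2) * ((a - r * (r * b)) / D + (r * (r * a) - b) / D)"
    for a b D :: real
  proof -
    have "(a - r * (r * b)) / D + (r * (r * a) - b) / D = (1 + r ^ 2) * (a - b) / D"
      by (simp add: add_divide_distrib[symmetric] power2_eq_square algebra_simps)
    then show ?thesis using p by (simp add: right_diff_distrib)
  qed
  show ?thesis
    unfolding top_exit_gf_def s_of_half e1 e2 power_Suc by (rule alg)
qed

lemma top_exit_gf_0: "top_exit_gf T r 0 = 0"
  by (simp add: top_exit_gf_def)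

lemma top_exit_gf_top:
  assumes "0 < r" "r < 1" "0 < T"
  shows "top_exit_gf T r T = 1"
proof -
  have "r ^ (2 * T) < 1" using assms by (subst power_less_one_iff) auto
  then show ?thesis by (simp add: top_exit_gf_def mult_2)
qed

lemma strip_gf_top:
  assumes t: "t \<ge> 2" and r: "0 < r" "r < 1" and k: "k \<le> t"
  shows "strip_gf t (\<lambda>v. v = int t) (s_of r) (int k) = top_exit_gf t r k"
proof (rule strip_gf_unique[OF _ _ _ _ _ _ k])
  show s: "0 \<le> s_of r" "s_of r < 1" using s_of_range[OF r] by auto
  show "strip_gf t (\<lambda>v. v = int t) (s_of r) 0 = top_exit_gf t r 0"
    using strip_gf_outside[OF s, of 0 t] t by (simp add: top_exit_gf_0)
  show "strip_gf t (\<lambda>v. v = int t) (s_of r) (int t) = top_exit_gf t r t"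
    using strip_gf_outside[OF s, of "int t" t] t r by (simp add: top_exit_gf_top)
qed (use top_exit_gf_rec[OF r] in auto)

text \<open>Generating function of leaving the strip at all; by symmetry it is the sum of the
  solutions for the two ends.\<close>
lemma strip_gf_ends:
  assumes t: "t \<ge> 2" and r: "0 < r" "r < 1" and k: "k \<le> t"
  shows "strip_gf t (\<lambda>v. v = 0 \<or> v = int t) (s_of r) (int k)
       = top_exit_gf t r k + top_exit_gf t r (t - k)"
proof (rule strip_gf_unique[OF _ _ _ _ _ _ k])
  show s: "0 \<le> s_of r" "s_of r < 1" using s_of_range[OF r] by auto
  show "strip_gf t (\<lambda>v. v = 0 \<or> v = int t) (s_of r) 0 = top_exit_gf t r 0 + top_exit_gf t r (t - 0)"
    using strip_gf_outside[OF s, of 0 t] t r by (simp add: top_exit_gf_0 top_exit_gf_top)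
  show "strip_gf t (\<lambda>v. v = 0 \<or> v = int t) (s_of r) (int t)
      = top_exit_gf t r t + top_exit_gf t r (t - t)"
    using strip_gf_outside[OF s, of "int t" t] t r by (simp add: top_exit_gf_0 top_exit_gf_top)
  fix k assume k: "0 < k" "k < t"
  have "t - k + 1 = t - (k - 1)" "t - k - 1 = t - (k + 1)" using k by auto
  then show "top_exit_gf t r k + top_exit_gf t r (t - k)
      = s_of r / 2 * (top_exit_gf t r (k + 1) + top_exit_gf t r (t - (k + 1))
                     + (top_exit_gf t r (k - 1) + top_exit_gf t r (t - (k - 1))))"
    using top_exit_gf_rec[OF r k] top_exit_gf_rec[OF r, of "t - k" t] k
    by (simp add: algebra_simps)
qed auto


section \<open>First hitting of \<open>tZ\<close> as exit from a strip\<close>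

lemma in_lattice_uminus: "in_lattice T (- v) = in_lattice T v"
  by (cases T) (auto simp: in_lattice_def)

lemma first_hit_uminus: "first_hit T n (map uminus xs) = first_hit T n xs"
  by (simp add: first_hit_def walk_uminus in_lattice_uminus)

text \<open>Before it first reaches \<open>tZ\<close>, a walk whose first step is \<open>+1\<close> stays strictly inside
  \<open>(0,t)\<close>: leaving it would require passing through \<open>0\<close> or \<open>t\<close>.\<close>
lemma first_hit_inside:
  assumes xs: "set xs \<subseteq> {-1, 1}" "walk xs 1 = 1" and t: "t \<ge> 1"
    and avoid: "\<And>j. 0 < j \<Longrightarrow> j \<le> k \<Longrightarrow> \<not> int t dvd walk xs j" and k: "0 < k"
  shows "0 < walk xs k \<and> walk xs k < int t"
proof (rule ccontr)
  assume out: "\<not> (0 < walk xs k \<and> walk xs k < int t)"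
  have "\<exists>j. 1 \<le> j \<and> j \<le> k \<and> int t dvd walk xs j"
  proof (cases "walk xs k \<le> 0")
    case True
    then obtain j where "1 \<le> j" "j \<le> k" "walk xs j = 0"
      using walk_ivt_down[OF xs(1), of 1 k 0] xs(2) k by auto
    then show ?thesis by auto
  next
    case False
    then have "int t \<le> walk xs k" using out by linarith
    then obtain j where "1 \<le> j" "j \<le> k" "walk xs j = int t"
      using walk_ivt_up[OF xs(1), of 1 k "int t"] xs(2) k t by auto
    then show ?thesis by auto
  qed
  then obtain j where "1 \<le> j" "j \<le> k" "int t dvd walk xs j" by blast
  then show False using avoid[of j] by simp
qed

lemma first_hit_up_iff:
  assumes t: "t \<ge> 2" and ys: "ys \<in> step_paths n"
  shows "first_hit (enat t) (Suc n) (1 # ys)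
     \<longleftrightarrow> stays_in_strip t 1 n ys \<and> (1 + walk ys n = 0 \<or> 1 + walk ys n = int t)"
proof
  define xs where "xs = 1 # ys"
  have sx: "set xs \<subseteq> {-1, 1}" using ys by (auto simp: xs_def step_paths_def)
  have w1: "walk xs 1 = 1" by (simp add: xs_def walk_def)
  assume "first_hit (enat t) (Suc n) (1 # ys)"
  then have avoid: "\<And>j. 0 < j \<Longrightarrow> j \<le> n \<Longrightarrow> \<not> int t dvd walk xs j"
    and hit: "int t dvd walk xs (Suc n)"
    by (auto simp: first_hit_def in_lattice_def xs_def)
  note inside = first_hit_inside[OF sx w1 _ avoid] 
  have "stays_in_strip t 1 n ys"
    unfolding stays_in_strip_def using inside[of "Suc _"] t by (auto simp: xs_def)
  moreover have "n \<noteq> 0"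
  proof
    assume "n = 0"
    then have "int t dvd 1" using hit w1 by (simp add: xs_def)
    then show False using t by simp
  qed
  then have "0 < walk xs n \<and> walk xs n < int t" using inside t by auto
  then have "0 \<le> walk xs (Suc n) \<and> walk xs (Suc n) \<le> int t"
    using walk_increment[OF sx, of n] by linarith
  then have "walk xs (Suc n) = 0 \<or> walk xs (Suc n) = int t"
  proof -
    have "\<not> (0 < walk xs (Suc n) \<and> walk xs (Suc n) < int t)"
      using hit zdvd_not_zless by blast
    then show ?thesis using \<open>0 \<le> walk xs (Suc n) \<and> walk xs (Suc n) \<le> int t\<close> by linarith
  qed
  ultimately show "stays_in_strip t 1 n ys \<and> (1 + walk ys n = 0 \<or> 1 + walk ys n = int t)"
    by (simp add: xs_def)
next
  assume a: "stays_in_strip t 1 n ys \<and> (1 + walk ys n = 0 \<or> 1 + walk ys n = int t)"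
  have "\<not> int t dvd 1 + walk ys k" if "k < n" for k
  proof -
    have "0 < 1 + walk ys k \<and> 1 + walk ys k < int t"
      using a that by (simp add: stays_in_strip_def)
    then show ?thesis using zdvd_not_zless by blast
  qed
  then show "first_hit (enat t) (Suc n) (1 # ys)"
    using a by (auto simp: first_hit_def in_lattice_def less_Suc_eq_0_disj)
qed

text \<open>A walk starting with a \<open>-1\<close> step cannot first hit \<open>tZ\<close> at \<open>t\<close>: it would pass \<open>0\<close> first.\<close>
lemma first_hit_down_not_top:
  assumes t: "t \<ge> 2" and ys: "ys \<in> step_paths n" and fh: "first_hit (enat t) (Suc n) ((-1) # ys)"
  shows "walk ((-1) # ys) (Suc n) \<noteq> int t"
proof
  define xs where "xs = (-1) # ys"
  have sx: "set xs \<subseteq> {-1, 1}" using ys by (auto simp: xs_def step_paths_def)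
  assume top: "walk ((-1) # ys) (Suc n) = int t"
  then obtain j where j: "1 \<le> j" "j \<le> Suc n" "walk xs j = 0"
    using walk_ivt_up[OF sx, of 1 "Suc n" 0] by (auto simp: xs_def walk_def)
  then have "j \<noteq> Suc n" using top t by (auto simp: xs_def)
  then have "0 < j" "j < Suc n" using j by auto
  with fh have "\<not> in_lattice (enat t) (walk xs j)"
    unfolding first_hit_def xs_def by blast
  then show False using j(3) by (simp add: in_lattice_def)
qed

lemma tau_prob_Suc:
  assumes t: "t \<ge> 2"
  shows "tau_prob (enat t) (Suc n) = strip_prob t (\<lambda>v. v = 0 \<or> v = int t) 1 n"
proof -
  let ?H = "first_hit (enat t) (Suc n)"
  have up: "{ys \<in> step_paths n. ?H (1 # ys)} = strip_paths t (\<lambda>v. v = 0 \<or> v = int t) 1 n"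
    using first_hit_up_iff[OF t] by (auto simp: strip_paths_def)
  have "?H ((-1) # ys) = ?H (1 # map uminus ys)" for ys
    using first_hit_uminus[of "enat t" "Suc n" "(-1) # ys"] by simp
  then have "card {ys \<in> step_paths n. ?H ((-1) # ys)} = card {ys \<in> step_paths n. ?H (1 # ys)}"
    using card_step_paths_reflect[of n "\<lambda>ys. ?H (1 # ys)"] by simp
  then show ?thesis
    unfolding tau_prob_def strip_prob_def card_step_paths_Suc up[symmetric] by simp
qed

lemma tau1_prob_Suc:
  assumes t: "t \<ge> 2"
  shows "tau1_prob t (Suc n) = strip_prob t (\<lambda>v. v = int t) 1 n / 2"
proof -
  let ?H = "\<lambda>xs. first_hit (enat t) (Suc n) xs \<and> walk xs (Suc n) = int t"
  have up: "{ys \<in> step_paths n. ?H (1 # ys)} = strip_paths t (\<lambda>v. v = int t) 1 n"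
    using first_hit_up_iff[OF t] t by (auto simp: strip_paths_def)
  have down: "{ys \<in> step_paths n. ?H ((-1) # ys)} = {}"
    by (auto dest: first_hit_down_not_top[OF t])
  show ?thesis
    unfolding tau1_prob_def strip_prob_def card_step_paths_Suc up down by simp
qed

text \<open>Before time \<open>t\<close> the walk cannot reach \<open>\<plusminus>t\<close>, so \<open>\<tau>\<^sup>\<infinity>\<close> and \<open>\<tau>\<^sup>t\<close> agree there.\<close>
lemma tau_prob_infinite:
  assumes "n < t"
  shows "tau_prob \<infinity> n = tau_prob (enat t) n"
proof -
  have "first_hit \<infinity> n xs = first_hit (enat t) n xs" if xs: "xs \<in> step_paths n" for xs
  proof -
    have "in_lattice (enat t) (walk xs k) = (walk xs k = 0)" if "k \<le> n" for k
    proof -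
      have "\<bar>walk xs k\<bar> < int t"
        using walk_abs_le[OF step_paths_set[OF xs], of k] that assms by linarith
      then show ?thesis using dvd_imp_le_int[of "walk xs k" "int t"] by (auto simp: in_lattice_def)
    qed
    then show ?thesis by (auto simp: first_hit_def in_lattice_def)
  qed
  then show ?thesis unfolding tau_prob_def by (metis (no_types, lifting) mem_Collect_eq Collect_cong)
qed


section \<open>Closed forms of the Laplace transforms\<close>

text \<open>\<open>Q\<^sub>t\<close> and \<open>Q\<^sup>1\<^sub>t\<close> evaluated at \<open>\<lambda> = -ln (s_of r)\<close>.\<close>
definition hit_gf :: "nat \<Rightarrow> real \<Rightarrow> real" where
  "hit_gf t r = 2 * r * (r + r ^ (t - 1)) / ((1 + r ^ 2) * (1 + r ^ t))"

definition top_hit_gf :: "nat \<Rightarrow> real \<Rightarrow> real" where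
  "top_hit_gf t r = r ^ t * (1 - r ^ 2) / ((1 + r ^ 2) * (1 - r ^ (2 * t)))"

lemma hit_gf_eq:
  assumes t: "t \<ge> 2" and r: "0 < r" "r < 1"
  shows "s_of r * (top_exit_gf t r 1 + top_exit_gf t r (t - 1)) = hit_gf t r"
proof -
  obtain m where tm: "t = Suc m" using t by (cases t) auto
  define a where "a = r ^ m"
  have a: "0 \<le> a" "a \<le> 1" using r by (auto simp: a_def power_le_one)
  have p2: "r ^ (m * 2) = r ^ m * r ^ m" by (simp add: power_mult power2_eq_square)
  have "r * a \<le> r * 1" using r a by (intro mult_left_mono) auto
  then have ra: "0 \<le> r * a" "r * a < 1" using r a by (simp_all, linarith)
  have h1: "top_exit_gf t r 1 = (a - r * (r * a)) / (1 - r * r * (a * a))"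
    unfolding top_exit_gf_def tm a_def by (simp add: power_add mult_2 algebra_simps p2)
  have h2: "top_exit_gf t r (t - 1) = (r - r * (a * a)) / (1 - r * r * (a * a))"
    unfolding top_exit_gf_def tm a_def by (simp add: power_add mult_2 algebra_simps p2)
  have den: "1 - r * r * (a * a) = (1 - r * a) * (1 + r * a)" by (simp add: algebra_simps)
  have num: "(a - r * (r * a)) + (r - r * (a * a)) = (r + a) * (1 - r * a)"
    by (simp add: algebra_simps)
  have "top_exit_gf t r 1 + top_exit_gf t r (t - 1) = (r + a) / (1 + r * a)"
    unfolding h1 h2 add_divide_distrib[symmetric] num den using ra by simp
  then show ?thesis
    unfolding hit_gf_def s_of_def tm a_def by simp
qed

lemma top_hit_gf_eq:
  assumes t: "t \<ge> 2" and r: "0 < r" "r < 1"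
  shows "s_of r / 2 * top_exit_gf t r 1 = top_hit_gf t r"
proof -
  obtain m where tm: "t = Suc m" using t by (cases t) auto
  define a where "a = r ^ m"
  have p2: "r ^ (m * 2) = r ^ m * r ^ m" by (simp add: power_mult power2_eq_square)
  have h1: "top_exit_gf t r 1 = (a - r * (r * a)) / (1 - r * r * (a * a))"
    unfolding top_exit_gf_def tm a_def by (simp add: power_add mult_2 algebra_simps p2)
  have g: "top_hit_gf t r = (r * a) * (1 - r ^ 2) / ((1 + r ^ 2) * (1 - r * r * (a * a)))"
    unfolding top_hit_gf_def tm a_def by (simp add: power_add mult_2 algebra_simps p2)
  have p: "1 + r ^ 2 \<noteq> 0" using zero_le_power2[of r] by linarith
  show ?thesis unfolding h1 g s_of_half using p by (simp add: power2_eq_square algebra_simps)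
qed

lemma tau_prob_0: "tau_prob T 0 = 0"
  by (simp add: tau_prob_def first_hit_def)

lemma tau1_prob_0: "tau1_prob t 0 = 0"
  by (simp add: tau1_prob_def first_hit_def)

lemma card_step_paths: "card (step_paths n) = 2 ^ n"
  by (simp add: step_paths_def card_lists_length_eq numeral_2_eq_2)

lemma tau_prob_nonneg: "0 \<le> tau_prob T n"
  by (simp add: tau_prob_def)

lemma tau_prob_le_1: "tau_prob T n \<le> 1"
proof -
  have "card {xs \<in> step_paths n. first_hit T n xs} \<le> card (step_paths n)"
    by (intro card_mono finite_step_paths) auto
  then show ?thesis by (simp add: tau_prob_def card_step_paths)
qed

lemma tau_gf_sums:
  assumes t: "t \<ge> 2" and r: "0 < r" "r < 1"
  shows "(\<lambda>n. s_of r ^ n * tau_prob (enat t) n) sums hit_gf t r"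
proof -
  let ?P = "\<lambda>v. v = 0 \<or> v = int t"
  have s: "0 \<le> s_of r" "s_of r < 1" using s_of_range[OF r] by auto
  have "(\<lambda>n. s_of r ^ n * strip_prob t ?P 1 n) sums (top_exit_gf t r 1 + top_exit_gf t r (t - 1))"
    using summable_sums[OF summable_strip_gf[OF s, where T=t and P="?P" and x=1]]
      strip_gf_ends[OF t r, of 1] t
    by (simp add: strip_gf_def)
  from sums_mult[OF this, of "s_of r"]
  have "(\<lambda>n. s_of r * (s_of r ^ n * strip_prob t ?P 1 n)) sums hit_gf t r"
    by (simp only: hit_gf_eq[OF t r])
  then have "(\<lambda>n. s_of r ^ Suc n * tau_prob (enat t) (Suc n)) sums hit_gf t r"
    using t by (simp add: tau_prob_Suc mult.assoc)
  then show ?thesis by (subst (asm) sums_Suc_iff) (simp add: tau_prob_0)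
qed

lemma tau1_gf_sums:
  assumes t: "t \<ge> 2" and r: "0 < r" "r < 1"
  shows "(\<lambda>n. s_of r ^ n * tau1_prob t n) sums top_hit_gf t r"
proof -
  let ?P = "\<lambda>v. v = int t"
  have s: "0 \<le> s_of r" "s_of r < 1" using s_of_range[OF r] by auto
  have "(\<lambda>n. s_of r ^ n * strip_prob t ?P 1 n) sums top_exit_gf t r 1"
    using summable_sums[OF summable_strip_gf[OF s, where T=t and P="?P" and x=1]]
      strip_gf_top[OF t r, of 1] t
    by (simp add: strip_gf_def)
  from sums_mult[OF this, of "s_of r / 2"]
  have "(\<lambda>n. s_of r / 2 * (s_of r ^ n * strip_prob t ?P 1 n)) sums top_hit_gf t r"
    by (simp only: top_hit_gf_eq[OF t r])
  then have "(\<lambda>n. s_of r ^ Suc n * tau1_prob t (Suc n)) sums top_hit_gf t r"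
    using t by (simp add: tau1_prob_Suc mult.assoc)
  then show ?thesis by (subst (asm) sums_Suc_iff) (simp add: tau1_prob_0)
qed

lemma exp_mult_minus_ln:
  assumes "0 < x"
  shows "exp (- (- ln x) * real n) = x ^ n"
proof -
  have "exp (- (- ln x) * real n) = exp (real n * ln x)" by (simp add: mult.commute)
  also have "\<dots> = exp (ln x) ^ n" by (rule exp_of_nat_mult)
  finally show ?thesis using assms by simp
qed

lemma suminf_ennreal_sums:
  assumes "f sums S" "\<And>n. 0 \<le> f n"
  shows "(\<Sum>n. ennreal (f n)) = ennreal S"
  using suminf_ennreal2[OF assms(2) sums_summable[OF assms(1)]] assms(1) by (simp add: sums_iff)

lemma Q_finite:
  assumes t: "t \<ge> 2" and r: "0 < r" "r < 1"
  shows "Q (enat t) (- ln (s_of r)) = ennreal (hit_gf t r)"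
proof -
  have nn: "0 \<le> s_of r ^ n * tau_prob (enat t) n" for n
    using s_of_pos[OF r(1)] tau_prob_nonneg[of "enat t" n] by simp
  show ?thesis
    unfolding Q_def exp_mult_minus_ln[OF s_of_pos[OF r(1)]]
    by (rule suminf_ennreal_sums[OF tau_gf_sums[OF t r] nn])
qed

lemma Q1_finite:
  assumes t: "t \<ge> 2" and r: "0 < r" "r < 1"
  shows "Q1 t (- ln (s_of r)) = top_hit_gf t r"
proof -
  have S: "(\<lambda>n. s_of r ^ n * tau1_prob t n) sums top_hit_gf t r"
    by (rule tau1_gf_sums[OF t r])
  have nn: "0 \<le> s_of r ^ n * tau1_prob t n" for n
    using s_of_pos[OF r(1)] by (simp add: tau1_prob_def)
  have "0 \<le> top_hit_gf t r"
    using suminf_nonneg[OF sums_summable[OF S] nn] sums_unique[OF S] by simp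
  then show ?thesis
    unfolding Q1_def exp_mult_minus_ln[OF s_of_pos[OF r(1)]] suminf_ennreal_sums[OF S nn] by simp
qed

lemma sums_close:
  fixes f g :: "nat \<Rightarrow> real"
  assumes f: "f sums F" and g: "g sums G" and q: "0 \<le> q" "q < 1"
    and agree: "\<And>n. n < t \<Longrightarrow> f n = g n" and tail: "\<And>n. \<bar>f n - g n\<bar> \<le> q ^ n"
  shows "\<bar>F - G\<bar> \<le> q ^ t / (1 - q)"
proof -
  define h where "h n = (if n < t then 0 else q ^ n)" for n
  have "(\<lambda>i. h (i + t)) sums (q ^ t * (1 / (1 - q)))"
    using sums_mult[OF geometric_sums[of q], of "q ^ t"] q by (simp add: h_def power_add mult.commute)
  then have h: "h sums (q ^ t / (1 - q))"
    using sums_iff_shift[of h t] by (simp add: h_def)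
  have bound: "f n - g n \<le> h n" "- h n \<le> f n - g n" for n
    using agree[of n] tail[of n] by (auto simp: h_def abs_le_iff)
  have d: "(\<lambda>n. f n - g n) sums (F - G)" by (rule sums_diff[OF f g])
  have "F - G \<le> q ^ t / (1 - q)"
    by (rule sums_le[OF _ d h]) (rule bound)
  moreover have "- (q ^ t / (1 - q)) \<le> F - G"
    by (rule sums_le[OF _ sums_minus[OF h] d]) (rule bound)
  ultimately show ?thesis by linarith
qed

lemma hit_gf_limit:
  assumes r: "0 < r" "r < 1"
  shows "(\<lambda>m. hit_gf (m + 2) r) \<longlonglongrightarrow> 2 * r ^ 2 / (1 + r ^ 2)"
proof -
  have eq: "hit_gf (m + 2) r = 2 * r * (r + r * r ^ m) / ((1 + r ^ 2) * (1 + r ^ m * r ^ 2))" for m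
    by (simp add: hit_gf_def power_add power2_eq_square)
  have p: "1 + r ^ 2 \<noteq> 0" using zero_le_power2[of r] by linarith
  have "(\<lambda>m. 2 * r * (r + r * r ^ m) / ((1 + r ^ 2) * (1 + r ^ m * r ^ 2)))
      \<longlonglongrightarrow> 2 * r * (r + r * 0) / ((1 + r ^ 2) * (1 + 0 * r ^ 2))"
    by (intro tendsto_intros LIMSEQ_power_zero) (use r p in auto)
  then show ?thesis unfolding eq by (simp add: power2_eq_square mult.assoc)
qed

text \<open>Letting \<open>t \<rightarrow> \<infinity>\<close>: since \<open>\<tau>\<^sup>\<infinity>\<close> and \<open>\<tau>\<^sup>t\<close> agree before time \<open>t\<close>,
  \<open>Q\<^sub>\<infinity>(-ln (s_of r)) = lim hit_gf t r\<close>.\<close>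
lemma Q_infinite:
  assumes r: "0 < r" "r < 1"
  shows "Q \<infinity> (- ln (s_of r)) = ennreal (2 * r ^ 2 / (1 + r ^ 2))"
proof -
  define s where "s = s_of r"
  have s: "0 < s" "s < 1" using s_of_pos s_of_less_1 r by (auto simp: s_def)
  define f where "f n = s ^ n * tau_prob \<infinity> n" for n
  have f_nonneg: "0 \<le> f n" for n using s tau_prob_nonneg by (simp add: f_def)
  have f_range: "0 \<le> s ^ n * tau_prob T n \<and> s ^ n * tau_prob T n \<le> s ^ n" for T n
    using s tau_prob_nonneg[of T n] tau_prob_le_1[of T n] by (simp add: mult_left_le)
  have "summable f"
    by (rule summable_comparison_test'[where g="\<lambda>n. s ^ n" and N=0])
      (use s f_range in \<open>auto simp: f_def\<close>)
  then have f: "f sums suminf f" by (rule summable_sums)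
  have close: "\<bar>hit_gf t r - suminf f\<bar> \<le> s ^ t / (1 - s)" if t: "t \<ge> 2" for t
  proof (rule sums_close[OF tau_gf_sums[OF t r, folded s_def] f])
    show "0 \<le> s" "s < 1" using s by auto
    show "s ^ n * tau_prob (enat t) n = f n" if "n < t" for n
      using tau_prob_infinite[OF that] by (simp add: f_def)
    show "\<bar>s ^ n * tau_prob (enat t) n - f n\<bar> \<le> s ^ n" for n
      using f_range[where T="enat t" and n=n] f_range[where T=\<infinity> and n=n]
      by (simp add: f_def abs_le_iff)
  qed
  have "(\<lambda>m. hit_gf (m + 2) r - suminf f) \<longlonglongrightarrow> 0"
  proof (rule Lim_null_comparison)
    show "\<forall>\<^sub>F m in sequentially. norm (hit_gf (m + 2) r - suminf f) \<le> s ^ (m + 2) / (1 - s)"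
      using close[of "_ + 2"] by (intro always_eventually allI) simp
    have "(\<lambda>m. s ^ m * s ^ 2 / (1 - s)) \<longlonglongrightarrow> 0 * s ^ 2 / (1 - s)"
      by (intro tendsto_intros LIMSEQ_power_zero) (use s in auto)
    then show "(\<lambda>m. s ^ (m + 2) / (1 - s)) \<longlonglongrightarrow> 0" by (simp add: power_add power2_eq_square mult_ac)
  qed
  then have "(\<lambda>m. hit_gf (m + 2) r) \<longlonglongrightarrow> suminf f" by (rule LIM_zero_cancel)
  then have "suminf f = 2 * r ^ 2 / (1 + r ^ 2)"
    using hit_gf_limit[OF r] LIMSEQ_unique by blast
  then show ?thesis
    unfolding Q_def exp_mult_minus_ln[OF s_of_pos[OF r(1)]] using suminf_ennreal_sums[OF f f_nonneg]
    by (simp add: f_def s_def)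
qed


section \<open>Identification of \<open>\<phi>\<close>\<close>

lemma Q_strict_anti:
  assumes p2: "tau_prob T 2 > 0" and Q1: "Q T l1 = ennreal c1" and Q2: "Q T l2 = ennreal c2"
    and c: "0 \<le> c1" "0 \<le> c2" and l: "l1 < l2"
  shows "c2 < c1"
proof -
  define f where "f l n = exp (- l * real n) * tau_prob T n" for l n
  have nn: "0 \<le> f l n" for l n by (simp add: f_def tau_prob_nonneg)
  have val: "f l sums c" if "Q T l = ennreal c" "0 \<le> c" for l c
  proof -
    have e: "(\<Sum>n. ennreal (f l n)) = ennreal c" using that by (simp add: Q_def f_def)
    have sf: "summable (f l)" by (rule summable_suminf_not_top[OF nn]) (simp add: e)
    then have "ennreal (suminf (f l)) = ennreal c" using e suminf_ennreal2[OF nn sf] by simp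
    then show ?thesis using that sf suminf_nonneg[OF sf nn] by (simp add: sums_iff)
  qed
  have d: "0 \<le> f l1 n - f l2 n" for n
    using l tau_prob_nonneg[of T n] by (simp add: f_def mult_right_mono)
  have "0 < f l1 2 - f l2 2" using l p2 by (simp add: f_def)
  then have "0 < (\<Sum>n. f l1 n - f l2 n)"
    using sums_summable[OF val[OF Q1 c(1)]] sums_summable[OF val[OF Q2 c(2)]] d
    by (intro suminf_pos2 summable_diff) auto
  then show ?thesis
    using sums_unique[OF sums_diff[OF val[OF Q1 c(1)] val[OF Q2 c(2)]]] by simp
qed

lemma phi_eqI:
  assumes p2: "tau_prob T 2 > 0" and Q0: "Q T l0 = ennreal (exp (- \<delta>))"
  shows "phi \<delta> T = l0"
  unfolding phi_def
proof (rule the_equality)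
  show "Q T l0 = ennreal (exp (- \<delta>))" by (rule Q0)
  fix l assume Ql: "Q T l = ennreal (exp (- \<delta>))"
  show "l = l0"
  proof (rule ccontr)
    assume "l \<noteq> l0"
    then consider "l < l0" | "l0 < l" by linarith
    then show False
      using Q_strict_anti[OF p2 Ql Q0] Q_strict_anti[OF p2 Q0 Ql] by cases auto
  qed
qed

lemma tau_prob_2_finite:
  assumes t: "t \<ge> 2"
  shows "tau_prob (enat t) 2 > 0"
proof -
  let ?P = "\<lambda>v. v = 0 \<or> v = int t"
  have "tau_prob (enat t) 2 = strip_prob t ?P 1 1"
    using tau_prob_Suc[OF t, of 1] by (simp add: numeral_2_eq_2)
  also have "\<dots> = (strip_prob t ?P 2 0 + strip_prob t ?P 0 0) / 2"
    using t by (simp add: strip_prob_Suc)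
  finally show ?thesis using strip_prob_nonneg[of t ?P 2 0] by (simp add: strip_prob_0)
qed

lemma tau_prob_2_infinite: "tau_prob \<infinity> 2 > 0"
  using tau_prob_infinite[of 2 3] tau_prob_2_finite[of 3] by simp


section \<open>The roots defining \<open>\<phi>\<close>\<close>

text \<open>The value of \<open>r\<close> with \<open>Q\<^sub>\<infinity>(-ln (s_of r)) = 2r\<^sup>2/(1+r\<^sup>2) = E\<close>.\<close>
definition root_inf :: "real \<Rightarrow> real" where
  "root_inf E = sqrt (E / (2 - E))"

lemma root_inf:
  assumes "0 < E" "E < 1"
  shows "0 < root_inf E" "root_inf E < 1" "root_inf E ^ 2 = E / (2 - E)"
    and "2 * root_inf E ^ 2 / (1 + root_inf E ^ 2) = E"
proof -
  have q: "0 < E / (2 - E)" "E / (2 - E) < 1" using assms by (auto simp: field_simps)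
  then show "0 < root_inf E" "root_inf E < 1" by (auto simp: root_inf_def)
  show sq: "root_inf E ^ 2 = E / (2 - E)" using q by (simp add: root_inf_def)
  have "2 - E \<noteq> 0" using assms by simp
  then show "2 * root_inf E ^ 2 / (1 + root_inf E ^ 2) = E" unfolding sq by (simp add: field_simps)
qed

lemma phi_infinite:
  assumes "\<delta> > 0"
  shows "phi \<delta> \<infinity> = - ln (s_of (root_inf (exp (- \<delta>))))"
proof (rule phi_eqI[OF tau_prob_2_infinite])
  have E: "0 < exp (- \<delta>)" "exp (- \<delta>) < 1" using assms by auto
  show "Q \<infinity> (- ln (s_of (root_inf (exp (- \<delta>))))) = ennreal (exp (- \<delta>))"
    unfolding Q_infinite[OF root_inf(1,2)[OF E]] root_inf(4)[OF E] ..
qed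

lemma hit_gf_continuous: "continuous_on {0..1} (hit_gf t)"
proof -
  have "(1 + x ^ 2) * (1 + x ^ t) \<noteq> 0" if "x \<in> {0..1::real}" for x
  proof -
    have "0 < 1 + x ^ 2" "0 < 1 + x ^ t" using that by (simp_all add: add_pos_nonneg)
    then show ?thesis by simp
  qed
  then have "continuous_on {0..1} (\<lambda>r::real. 2 * r * (r + r ^ (t - 1)) / ((1 + r ^ 2) * (1 + r ^ t)))"
    by (intro continuous_intros) auto
  then show ?thesis unfolding hit_gf_def[abs_def] .
qed

text \<open>Every level \<open>E \<in> (0,1)\<close> is attained by \<open>hit_gf t\<close> on \<open>(0,1)\<close>, since it runs from \<open>0\<close> to \<open>1\<close>.\<close>
lemma hit_gf_root:
  assumes t: "t \<ge> 2" and E: "0 < E" "E < 1"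
  shows "\<exists>b. 0 < b \<and> b < 1 \<and> hit_gf t b = E"
proof -
  have f0: "hit_gf t 0 = 0" and f1: "hit_gf t 1 = 1" by (simp_all add: hit_gf_def)
  obtain b where b: "0 \<le> b" "b \<le> 1" "hit_gf t b = E"
    using IVT'[of "hit_gf t" 0 E 1] hit_gf_continuous f0 f1 E by auto
  moreover have "b \<noteq> 0" "b \<noteq> 1" using b f0 f1 E by auto
  ultimately show ?thesis by (intro exI[of _ b]) auto
qed

lemma phi_finite:
  assumes t: "t \<ge> 2" and "\<delta> > 0"
  shows "\<exists>b. 0 < b \<and> b < 1 \<and> hit_gf t b = exp (- \<delta>) \<and> phi \<delta> (enat t) = - ln (s_of b)"
proof -
  have "0 < exp (- \<delta>)" "exp (- \<delta>) < 1" using assms by auto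
  then obtain b where b: "0 < b" "b < 1" "hit_gf t b = exp (- \<delta>)"
    using hit_gf_root[OF t] by blast
  then have "phi \<delta> (enat t) = - ln (s_of b)"
    by (intro phi_eqI[OF tau_prob_2_finite[OF t]]) (simp only: Q_finite[OF t b(1,2)] b(3))
  with b show ?thesis by blast
qed

lemma hit_gf_excess:
  assumes t: "t \<ge> 2" and b: "0 < b" "b < 1"
  shows "0 < hit_gf t b - 2 * b ^ 2 / (1 + b ^ 2)" "hit_gf t b - 2 * b ^ 2 / (1 + b ^ 2) \<le> 2 * b ^ t"
proof -
  obtain k where tk: "t = Suc k" using t by (cases t) auto
  have bt: "0 < b ^ t" "b ^ t < 1" and b2: "b ^ 2 < 1"
    using b t by (auto simp: power_less_one_iff)
  have P: "0 < 1 + b ^ 2" and Q: "0 < 1 + b ^ t" using bt by (auto simp: add_pos_nonneg)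
  have frac: "X / (U * V) - Y / U = (X - Y * V) / (U * V)" if "U \<noteq> 0" "V \<noteq> 0" for X Y U V :: real
    using that by (simp add: field_simps)
  have bt_eq: "b ^ t = b * b ^ k" by (simp add: tk)
  have "hit_gf t b - 2 * b ^ 2 / (1 + b ^ 2)
      = 2 * b * (b + b ^ k) / ((1 + b ^ 2) * (1 + b * b ^ k)) - 2 * b ^ 2 / (1 + b ^ 2)"
    unfolding hit_gf_def tk by simp
  also have "\<dots> = (2 * b * (b + b ^ k) - 2 * b ^ 2 * (1 + b * b ^ k)) / ((1 + b ^ 2) * (1 + b * b ^ k))"
    using P Q unfolding bt_eq by (intro frac) auto
  also have "2 * b * (b + b ^ k) - 2 * b ^ 2 * (1 + b * b ^ k) = 2 * (b * b ^ k) * (1 - b ^ 2)"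
    by (simp add: power2_eq_square algebra_simps)
  finally have "hit_gf t b - 2 * b ^ 2 / (1 + b ^ 2) = 2 * b ^ t * (1 - b ^ 2) / ((1 + b ^ 2) * (1 + b ^ t))"
    unfolding bt_eq .
  moreover have D: "1 \<le> (1 + b ^ 2) * (1 + b ^ t)"
    using mult_mono[of 1 "1 + b ^ 2" 1 "1 + b ^ t"] bt by simp
  moreover have N: "0 < 2 * b ^ t * (1 - b ^ 2)" "2 * b ^ t * (1 - b ^ 2) \<le> 2 * b ^ t"
    using bt b2 by simp_all
  moreover have "2 * b ^ t * (1 - b ^ 2) / ((1 + b ^ 2) * (1 + b ^ t)) \<le> 2 * b ^ t * (1 - b ^ 2)"
    using D N(1) by (simp add: divide_le_eq mult_le_cancel_left1)
  ultimately show "0 < hit_gf t b - 2 * b ^ 2 / (1 + b ^ 2)"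
    "hit_gf t b - 2 * b ^ 2 / (1 + b ^ 2) \<le> 2 * b ^ t"
    by simp_all
qed

lemma root_gap:
  assumes t: "t \<ge> 2" and a: "0 < a" "a < 1" and b: "0 < b" "b < 1"
    and eq: "hit_gf t b = 2 * a ^ 2 / (1 + a ^ 2)"
  shows "b < a" "a - b \<le> 4 * a ^ t / a"
proof -
  define G where "G = a ^ 2 - b ^ 2"
  have pa: "0 < 1 + a ^ 2" and pb: "0 < 1 + b ^ 2" by (auto simp: add_pos_nonneg)
  have "2 * a ^ 2 / (1 + a ^ 2) - 2 * b ^ 2 / (1 + b ^ 2) = 2 * G / ((1 + a ^ 2) * (1 + b ^ 2))"
    using pa pb unfolding G_def by (simp add: field_simps)
  then have G: "0 < 2 * G / ((1 + a ^ 2) * (1 + b ^ 2))" "2 * G / ((1 + a ^ 2) * (1 + b ^ 2)) \<le> 2 * b ^ t"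
    using hit_gf_excess[OF t b] eq by simp_all
  then have "0 < G" using mult_pos_pos[OF pa pb] by (simp add: zero_less_divide_iff)
  show ba: "b < a"
  proof (rule ccontr)
    assume "\<not> b < a"
    then have "a ^ 2 \<le> b ^ 2" using a by (intro power_mono) auto
    then show False using \<open>0 < G\<close> by (simp add: G_def)
  qed
  have "(1 + a ^ 2) * (1 + b ^ 2) \<le> 2 * 2"
    using a b pa pb by (intro mult_mono) (auto simp: power_le_one less_imp_le)
  then have "G / 2 \<le> 2 * G / ((1 + a ^ 2) * (1 + b ^ 2))"
    using divide_left_mono[of "(1 + a ^ 2) * (1 + b ^ 2)" 4 "2 * G"] \<open>0 < G\<close> pa pb by simp
  also have "\<dots> \<le> 2 * a ^ t" using G(2) power_mono[of b a t] ba b by simp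
  finally have "G \<le> 4 * a ^ t" by simp
  moreover have "a * (a - b) \<le> G"
    unfolding G_def using ba b by (simp add: power2_eq_square algebra_simps mult_left_mono)
  ultimately have "a * (a - b) \<le> 4 * a ^ t" by linarith
  then show "a - b \<le> 4 * a ^ t / a" using a by (simp add: le_divide_eq mult.commute)
qed


lemma Q1_along_even_roots:
  assumes "\<delta> > 0"
  defines "a \<equiv> root_inf (exp (- \<delta>))"
  obtains B where "\<And>m. 1 \<le> m \<Longrightarrow> Q1 (2 * m) (phi \<delta> (enat (2 * m))) = top_hit_gf (2 * m) (B m)"
    and "\<And>m. 1 \<le> m \<Longrightarrow> 0 < B m \<and> B m < a \<and> a - B m \<le> 4 * a ^ (2 * m) / a"
proof -
  have a: "0 < a" "a < 1" "2 * a ^ 2 / (1 + a ^ 2) = exp (- \<delta>)"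
    using assms root_inf[of "exp (- \<delta>)"] by auto
  have "\<forall>m. \<exists>b. 1 \<le> m \<longrightarrow> 0 < b \<and> b < 1 \<and> hit_gf (2 * m) b = exp (- \<delta>)
      \<and> phi \<delta> (enat (2 * m)) = - ln (s_of b)"
    using phi_finite[OF _ assms(1)] by simp
  then obtain B where B: "\<And>m. 1 \<le> m \<Longrightarrow> 0 < B m \<and> B m < 1 \<and> hit_gf (2 * m) (B m) = exp (- \<delta>)
      \<and> phi \<delta> (enat (2 * m)) = - ln (s_of (B m))"
    by metis
  show ?thesis
  proof (rule that)
    fix m :: nat assume m: "1 \<le> m"
    show "Q1 (2 * m) (phi \<delta> (enat (2 * m))) = top_hit_gf (2 * m) (B m)"
      using Q1_finite[of "2 * m" "B m"] B[OF m] m by simp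
    show "0 < B m \<and> B m < a \<and> a - B m \<le> 4 * a ^ (2 * m) / a"
      using root_gap[of "2 * m" a "B m"] B[OF m] a m by simp
  qed
qed

section \<open>Asymptotics along even \<open>T\<close>\<close>

text \<open>If \<open>0 < a - B m \<le> 4 a\<^sup>2\<^sup>m / a\<close> then \<open>(B m / a)\<^sup>2\<^sup>m \<rightarrow> 1\<close>, by Bernoulli's inequality.\<close>
lemma root_power_ratio:
  fixes a :: real and B :: "nat \<Rightarrow> real"
  assumes a: "0 < a" "a < 1"
    and B: "\<And>m. 1 \<le> m \<Longrightarrow> 0 < B m \<and> B m < a \<and> a - B m \<le> 4 * a ^ (2 * m) / a"
  shows "(\<lambda>m. (B m / a) ^ (2 * m)) \<longlonglongrightarrow> 1"
proof (rule tendsto_sandwich)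
  have a2: "a ^ 2 < 1" using a by (simp add: power_less_one_iff)
  have "(\<lambda>m. of_nat m * (a ^ 2) ^ m) \<longlonglongrightarrow> (0::real)"
    by (rule powser_times_n_limit_0) (use a a2 in simp)
  then have "(\<lambda>m. 2 * (of_nat m * (a ^ 2) ^ m)) \<longlonglongrightarrow> (0::real)"
    by (intro tendsto_mult_right_zero)
  then have lim0: "(\<lambda>m. real (2 * m) * a ^ (2 * m)) \<longlonglongrightarrow> 0"
    by (simp add: power_mult mult.assoc)
  have "(\<lambda>m. 1 - 4 * (real (2 * m) * a ^ (2 * m)) / a ^ 2) \<longlonglongrightarrow> 1 - 4 * 0 / a ^ 2"
    using lim0 a by (intro tendsto_intros) auto
  then show "(\<lambda>m. 1 - 4 * (real (2 * m) * a ^ (2 * m)) / a ^ 2) \<longlonglongrightarrow> 1" by simp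
  show "eventually (\<lambda>m. 1 - 4 * (real (2 * m) * a ^ (2 * m)) / a ^ 2 \<le> (B m / a) ^ (2 * m)) sequentially"
  proof (rule eventually_mono[OF eventually_ge_at_top[of 1]])
    fix m :: nat assume m: "1 \<le> m"
    define x where "x = B m / a - 1"
    have x: "-1 \<le> x" "- (4 * a ^ (2 * m) / a ^ 2) \<le> x"
      using B[OF m] a by (simp_all add: x_def field_simps power2_eq_square)
    have "1 - 4 * (real (2 * m) * a ^ (2 * m)) / a ^ 2 = 1 + real (2 * m) * (- (4 * a ^ (2 * m) / a ^ 2))"
      by simp
    also have "\<dots> \<le> 1 + real (2 * m) * x" using x by (intro add_left_mono mult_left_mono) auto
    also have "\<dots> \<le> (1 + x) ^ (2 * m)" by (rule Bernoulli_inequality[OF x(1)])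
    finally show "1 - 4 * (real (2 * m) * a ^ (2 * m)) / a ^ 2 \<le> (B m / a) ^ (2 * m)"
      by (simp add: x_def)
  qed
  show "eventually (\<lambda>m. (B m / a) ^ (2 * m) \<le> 1) sequentially"
  proof (rule eventually_mono[OF eventually_ge_at_top[of 1]])
    fix m :: nat assume "1 \<le> m"
    then have "0 < B m" "B m < a" using B by auto
    then show "(B m / a) ^ (2 * m) \<le> 1" using a by (intro power_le_one) auto
  qed
qed simp

lemma root_limits:
  fixes a :: real and B :: "nat \<Rightarrow> real"
  assumes a: "0 < a" "a < 1"
    and B: "\<And>m. 1 \<le> m \<Longrightarrow> 0 < B m \<and> B m < a \<and> a - B m \<le> 4 * a ^ (2 * m) / a"
  shows "B \<longlonglongrightarrow> a" "(\<lambda>m. B m ^ (2 * (2 * m))) \<longlonglongrightarrow> 0"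
proof -
  have a2: "a ^ 2 < 1" "a ^ 4 < 1" using a by (simp_all add: power_less_one_iff)
  show "B \<longlonglongrightarrow> a"
  proof (rule tendsto_sandwich)
    show "eventually (\<lambda>m. a - 4 * (a ^ 2) ^ m / a \<le> B m) sequentially"
    proof (rule eventually_mono[OF eventually_ge_at_top[of 1]])
      fix m :: nat assume "1 \<le> m"
      then have "a - B m \<le> 4 * a ^ (2 * m) / a" using B by blast
      then show "a - 4 * (a ^ 2) ^ m / a \<le> B m" by (simp add: power_mult)
    qed
    show "eventually (\<lambda>m. B m \<le> a) sequentially"
      by (rule eventually_mono[OF eventually_ge_at_top[of 1]]) (use B in force)
    have "(\<lambda>m. a - 4 * (a ^ 2) ^ m / a) \<longlonglongrightarrow> a - 4 * 0 / a"
      by (intro tendsto_intros LIMSEQ_power_zero) (use a a2 in simp_all)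
    then show "(\<lambda>m. a - 4 * (a ^ 2) ^ m / a) \<longlonglongrightarrow> a" by simp
  qed simp
  show "(\<lambda>m. B m ^ (2 * (2 * m))) \<longlonglongrightarrow> 0"
  proof (rule tendsto_sandwich)
    show "eventually (\<lambda>m. 0 \<le> B m ^ (2 * (2 * m))) sequentially"
      by (rule eventually_mono[OF eventually_ge_at_top[of 1]]) (use B in force)
    show "eventually (\<lambda>m. B m ^ (2 * (2 * m)) \<le> (a ^ 4) ^ m) sequentially"
    proof (rule eventually_mono[OF eventually_ge_at_top[of 1]])
      fix m :: nat assume "1 \<le> m"
      then have "0 < B m" "B m < a" using B by auto
      then have "B m ^ (2 * (2 * m)) \<le> a ^ (2 * (2 * m))" by (intro power_mono) auto
      then show "B m ^ (2 * (2 * m)) \<le> (a ^ 4) ^ m" by (simp add: power_mult[symmetric] mult.commute)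
    qed
    show "(\<lambda>m. (a ^ 4) ^ m) \<longlonglongrightarrow> 0" using a a2 by (intro LIMSEQ_power_zero) simp
  qed simp
qed

lemma top_hit_gf_asymp:
  fixes a :: real and B :: "nat \<Rightarrow> real"
  assumes a: "0 < a" "a < 1"
    and B: "\<And>m. 1 \<le> m \<Longrightarrow> 0 < B m \<and> B m < a \<and> a - B m \<le> 4 * a ^ (2 * m) / a"
  shows "(\<lambda>m. top_hit_gf (2 * m) (B m)) \<sim>[sequentially] (\<lambda>m. (1 - a ^ 2) / (1 + a ^ 2) * a ^ (2 * m))"
proof (rule asymp_equivI')
  define K where "K = (1 - a ^ 2) / (1 + a ^ 2)"
  have pa: "0 < 1 + a ^ 2" by (simp add: add_pos_nonneg)
  have K: "0 < K" using a pa by (simp add: K_def power_less_one_iff)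
  define ratio where
    "ratio m = (B m / a) ^ (2 * m) * ((1 - B m ^ 2) / (1 + B m ^ 2)) / K / (1 - B m ^ (2 * (2 * m)))" for m
  have "ratio \<longlonglongrightarrow> 1 * ((1 - a ^ 2) / (1 + a ^ 2)) / K / (1 - 0)"
    unfolding ratio_def[abs_def] using pa K
    by (intro tendsto_intros root_power_ratio[OF a B] root_limits[OF a B]) auto
  moreover have "a ^ 2 \<noteq> 1" using a by (simp add: power_less_one_iff less_imp_neq)
  ultimately have "ratio \<longlonglongrightarrow> 1" using K pa by (simp add: K_def)
  have "top_hit_gf (2 * m) (B m) / (K * a ^ (2 * m)) = ratio m" if m: "1 \<le> m" for m
  proof -
    have b: "0 < B m" "B m < 1" using B[OF m] a by auto
    have "0 < 1 + B m ^ 2" by (simp add: add_pos_nonneg)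
    moreover have "B m ^ (2 * (2 * m)) < 1" using b m by (simp add: power_less_one_iff)
    ultimately show ?thesis
      unfolding top_hit_gf_def ratio_def using K a by (simp add: power_divide field_simps)
  qed
  then have "eventually (\<lambda>m. ratio m = top_hit_gf (2 * m) (B m) / (K * a ^ (2 * m))) sequentially"
    by (intro eventually_mono[OF eventually_ge_at_top[of 1]]) simp
  with \<open>ratio \<longlonglongrightarrow> 1\<close> have "(\<lambda>m. top_hit_gf (2 * m) (B m) / (K * a ^ (2 * m))) \<longlonglongrightarrow> 1"
    by (rule Lim_transform_eventually)
  then show "(\<lambda>m. top_hit_gf (2 * m) (B m) / ((1 - a ^ 2) / (1 + a ^ 2) * a ^ (2 * m))) \<longlonglongrightarrow> 1"
    by (simp only: K_def)
qed


lemma prefactor_eq: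
  assumes "\<delta> > 0"
  defines "a \<equiv> root_inf (exp (- \<delta>))"
  shows "sqrt (1 - exp (- 2 * phi \<delta> \<infinity>)) = (1 - a ^ 2) / (1 + a ^ 2)"
proof -
  have a: "0 < a" "a < 1" using assms root_inf[of "exp (- \<delta>)"] by auto
  have pa: "0 < 1 + a ^ 2" by (simp add: add_pos_nonneg)
  have "exp (- 2 * phi \<delta> \<infinity>) = s_of a ^ 2"
    using exp_mult_minus_ln[OF s_of_pos[OF a(1)], of 2] phi_infinite[OF assms(1)]
    by (simp add: a_def mult.commute)
  moreover have "1 - s_of a ^ 2 = ((1 - a ^ 2) / (1 + a ^ 2)) ^ 2"
  proof -
    have "1 - (x / P) ^ 2 = (P ^ 2 - x ^ 2) / P ^ 2" if "P \<noteq> 0" for x P :: real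
      using that by (simp add: field_simps)
    then have "1 - s_of a ^ 2 = ((1 + a ^ 2) ^ 2 - (2 * a) ^ 2) / (1 + a ^ 2) ^ 2"
      unfolding s_of_def using pa by simp
    also have "(1 + a ^ 2) ^ 2 - (2 * a) ^ 2 = (1 - a ^ 2) ^ 2"
      by (simp add: power2_eq_square algebra_simps)
    finally show ?thesis by (simp add: power_divide)
  qed
  moreover have "0 \<le> (1 - a ^ 2) / (1 + a ^ 2)"
    using a pa by (simp add: power_le_one)
  ultimately show ?thesis by (simp only: real_sqrt_abs abs_of_nonneg)
qed

lemma c_delta_eq:
  assumes "\<delta> > 0"
  defines "a \<equiv> root_inf (exp (- \<delta>))"
  shows "c_delta \<delta> = - ln a"
proof -
  define K where "K = (1 - a ^ 2) / (1 + a ^ 2)"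
  have a: "0 < a" "a < 1" using assms root_inf[of "exp (- \<delta>)"] by auto
  have pa: "0 < 1 + a ^ 2" by (simp add: add_pos_nonneg)
  have K: "0 < 1 + K" using a pa by (simp add: K_def add_pos_nonneg power_le_one)
  have "1 + K = 2 / (1 + a ^ 2)" unfolding K_def using pa by (simp add: field_simps)
  then have ratio: "(1 + K) / s_of a = 1 / a" unfolding s_of_def using pa a by (simp add: field_simps)
  have "c_delta \<delta> = phi \<delta> \<infinity> + ln (1 + K)"
    unfolding c_delta_def prefactor_eq[OF assms(1)] by (simp add: K_def a_def)
  also have "\<dots> = ln (1 + K) - ln (s_of a)"
    unfolding phi_infinite[OF assms(1)] a_def by simp
  also have "\<dots> = ln ((1 + K) / s_of a)" using K s_of_pos[OF a(1)] by (simp add: ln_div)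
  also have "\<dots> = - ln a" unfolding ratio using a by (simp add: ln_div)
  finally show ?thesis .
qed

lemma c_delta_closed_form:
  assumes "\<delta> > 0"
  shows "c_delta \<delta> = \<delta> / 2 + ln (sqrt (2 - exp (- \<delta>)))"
proof -
  define E where "E = exp (- \<delta>)"
  have E: "0 < E" "E < 1" using assms by (auto simp: E_def)
  have "ln (root_inf E) = (ln E - ln (2 - E)) / 2"
    using E by (simp add: root_inf_def ln_sqrt ln_div)
  moreover have "ln (sqrt (2 - E)) = ln (2 - E) / 2" using E by (simp add: ln_sqrt)
  ultimately show ?thesis
    using c_delta_eq[OF assms] by (simp add: E_def)
qed


theorem lemma7:
  fixes \<delta> :: real
  assumes "\<delta> > 0"
  shows "c_delta \<delta> = \<delta> / 2 + ln (sqrt (2 - exp (- \<delta>)))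
     \<and> (\<lambda>m::nat. Q1 (2 * m) (phi \<delta> (enat (2 * m))))
           \<sim>[sequentially]
         (\<lambda>m::nat. sqrt (1 - exp (- 2 * phi \<delta> \<infinity>)) * exp (- c_delta \<delta> * real (2 * m)))"
proof -
  define a where "a = root_inf (exp (- \<delta>))"
  have a: "0 < a" "a < 1" using assms root_inf[of "exp (- \<delta>)"] by (auto simp: a_def)
  obtain B where Q1_eq: "\<And>m. 1 \<le> m \<Longrightarrow> Q1 (2 * m) (phi \<delta> (enat (2 * m))) = top_hit_gf (2 * m) (B m)"
    and gap: "\<And>m. 1 \<le> m \<Longrightarrow> 0 < B m \<and> B m < a \<and> a - B m \<le> 4 * a ^ (2 * m) / a"
    using Q1_along_even_roots[OF assms] unfolding a_def by metis
  have target: "sqrt (1 - exp (- 2 * phi \<delta> \<infinity>)) * exp (- c_delta \<delta> * real (2 * m))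
      = (1 - a ^ 2) / (1 + a ^ 2) * a ^ (2 * m)" for m
    unfolding prefactor_eq[OF assms, folded a_def] c_delta_eq[OF assms, folded a_def]
      exp_mult_minus_ln[OF a(1)] ..
  have "(\<lambda>m. Q1 (2 * m) (phi \<delta> (enat (2 * m)))) \<sim>[sequentially]
      (\<lambda>m. (1 - a ^ 2) / (1 + a ^ 2) * a ^ (2 * m))"
    using top_hit_gf_asymp[OF a gap] Q1_eq
    by (subst asymp_equiv_cong[OF eventually_mono[OF eventually_ge_at_top[of 1]]]) auto
  then show ?thesis
    unfolding target using c_delta_closed_form[OF assms] by simp
qed

end
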